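(* Consider formal expressions built from one variable $x$ and real constants using only the binary operators $+,-,\times,\div$ (with parentheses allowed freely), and let the operator count of an expression be the number of occurrences of these operators in it. Each expression defines a function $f(x)$ wherever it is defined. Say that $f$ is admissible if: (1) $f$ is defined on all of $\mathbb{R}^+=(0,\infty)$ and takes values in $[0,1]$; (2) $f(1)=\tfrac12$; (3) $\lim_{x\to 0} f(x)=0$; (4) $\lim_{x\to\infty} f(x)=1$. Then no expression with operator count $0$ or $1$ defines an admissible function, and every expression with operator count exactly $2$ that defines an admissible function defines $f(x)=\dfrac{x}{1+x}$ (which is admissible). Consequently, with $x=\pi_i/\pi_j$ for positive strengths $\pi_i,\pi_j$, the unique admissible function of minimal operator count gives $f(\pi_i/\pi_j)=\dfrac{\pi_i}{\pi_i+\pi_j}$.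
   Context: Here $x=x_{ij}=\pi_i/\pi_j$ is the ratio of positive strength parameters of items $i$ and $j$, and $f(x_{ij})$ is intended as the probability that $i$ is preferred to $j$ in a pairwise comparison. Constants may appear in place of the variable at no cost in the operator count; parentheses do not count as operators. *)

theory Defs
  imports Complex_Main
begin

datatype expr = Var | Const real
  | Add expr expr | Sub expr expr | Mul expr expr | Div expr expr

fun ops :: "expr \<Rightarrow> nat" where
  "ops Var = 0"
| "ops (Const c) = 0"
| "ops (Add a b) = Suc (ops a + ops b)"
| "ops (Sub a b) = Suc (ops a + ops b)"
| "ops (Mul a b) = Suc (ops a + ops b)"
| "ops (Div a b) = Suc (ops a + ops b)"

fun eval :: "expr \<Rightarrow> real \<Rightarrow> real option" where
  "eval Var x = Some x"
| "eval (Const c) x = Some c"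
| "eval (Add a b) x = (case (eval a x, eval b x) of (Some u, Some v) \<Rightarrow> Some (u + v) | _ \<Rightarrow> None)"
| "eval (Sub a b) x = (case (eval a x, eval b x) of (Some u, Some v) \<Rightarrow> Some (u - v) | _ \<Rightarrow> None)"
| "eval (Mul a b) x = (case (eval a x, eval b x) of (Some u, Some v) \<Rightarrow> Some (u * v) | _ \<Rightarrow> None)"
| "eval (Div a b) x = (case (eval a x, eval b x) of
      (Some u, Some v) \<Rightarrow> (if v = 0 then None else Some (u / v)) | _ \<Rightarrow> None)"

definition admissible :: "expr \<Rightarrow> bool" where
  "admissible e \<longleftrightarrow>
     (\<forall>x>0. \<exists>v. eval e x = Some v \<and> 0 \<le> v \<and> v \<le> 1)
   \<and> eval e 1 = Some (1/2)
   \<and> ((\<lambda>x. the (eval e x)) \<longlongrightarrow> 0) (at_right 0)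
   \<and> ((\<lambda>x. the (eval e x)) \<longlongrightarrow> 1) at_top"

end

theory Submission
  imports Defs "HOL-Computational_Algebra.Polynomial" "HOL-Real_Asymp.Real_Asymp"
begin

(* On (0, oo) every expression with at most one operator is a Laurent polynomial p(x) / x^n, and
   so are sums, differences and products of such expressions. A Laurent polynomial with finite
   limits at 0+ and at oo is constant: the limit at 0+ cancels the denominator, and a polynomial
   with a finite limit at oo has degree 0. Hence it cannot tend to 0 and to 1. With two operators,
   the only remaining shape is a quotient of two affine functions (p x + q) / (a x + b); the limit
   at 0+ forces q = 0, the limit at oo forces p = a, and f(1) = 1/2 forces b = a. *)

definition laurent_fun :: "(real \<Rightarrow> real) \<Rightarrow> bool" where
  "laurent_fun h \<longleftrightarrow> (\<exists>p n. \<forall>x>0. h x = poly p x / x ^ n)"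

lemma laurent_fun_cong:
  assumes "\<forall>x>0. f x = g x"
  shows "laurent_fun f \<longleftrightarrow> laurent_fun g"
  using assms unfolding laurent_fun_def by simp

lemma laurent_fun_const: "laurent_fun (\<lambda>x. c)"
  unfolding laurent_fun_def by (rule exI[of _ "[:c:]"], rule exI[of _ 0]) simp

lemma laurent_fun_ident: "laurent_fun (\<lambda>x. x)"
  unfolding laurent_fun_def by (rule exI[of _ "[:0, 1:]"], rule exI[of _ 0]) simp

lemma laurent_fun_inverse_ident: "laurent_fun (\<lambda>x. inverse x)"
  unfolding laurent_fun_def by (rule exI[of _ "[:1:]"], rule exI[of _ 1]) (simp add: field_simps)

lemma laurent_fun_add:
  assumes "laurent_fun f" and "laurent_fun g"
  shows "laurent_fun (\<lambda>x. f x + g x)"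
proof -
  obtain p m q n where f: "\<forall>x>0. f x = poly p x / x ^ m" and g: "\<forall>x>0. g x = poly q x / x ^ n"
    using assms unfolding laurent_fun_def by blast
  have "\<forall>x>0. f x + g x = poly (p * monom 1 n + q * monom 1 m) x / x ^ (m + n)"
    using f g by (simp add: poly_monom field_simps power_add)
  then show ?thesis unfolding laurent_fun_def by blast
qed

lemma laurent_fun_mult:
  assumes "laurent_fun f" and "laurent_fun g"
  shows "laurent_fun (\<lambda>x. f x * g x)"
proof -
  obtain p m q n where f: "\<forall>x>0. f x = poly p x / x ^ m" and g: "\<forall>x>0. g x = poly q x / x ^ n"
    using assms unfolding laurent_fun_def by blast
  have "\<forall>x>0. f x * g x = poly (p * q) x / x ^ (m + n)"
    using f g by (simp add: power_add)
  then show ?thesis unfolding laurent_fun_def by blast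
qed

lemma laurent_fun_divide:
  assumes "laurent_fun f" and "laurent_fun (\<lambda>x. inverse (g x))"
  shows "laurent_fun (\<lambda>x. f x / g x)"
  using laurent_fun_mult[OF assms] by (simp add: divide_inverse)

lemma laurent_fun_diff:
  assumes "laurent_fun f" and "laurent_fun g"
  shows "laurent_fun (\<lambda>x. f x - g x)"
  using laurent_fun_add[OF assms(1) laurent_fun_mult[OF laurent_fun_const[of "-1"] assms(2)]]
  by simp

lemmas laurent_fun_intros = laurent_fun_const laurent_fun_ident laurent_fun_inverse_ident
  laurent_fun_add laurent_fun_diff laurent_fun_mult laurent_fun_divide

lemma tendsto_cong_pos:
  fixes f g :: "real \<Rightarrow> real"
  assumes "\<forall>\<^sub>F x in F. x > 0" and "\<forall>x>0. f x = g x"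
  shows "(f \<longlongrightarrow> l) F \<longleftrightarrow> (g \<longlongrightarrow> l) F"
  using assms by (intro tendsto_cong) (auto elim: eventually_mono)

lemma poly_tendsto_at_top_imp_degree_0:
  fixes p :: "real poly"
  assumes "(poly p \<longlongrightarrow> L) at_top"
  shows "degree p = 0"
proof (rule ccontr)
  assume "degree p \<noteq> 0"
  then have "filterlim (poly p) at_infinity at_infinity"
    by (intro filterlim_poly_at_infinity) simp
  then have "filterlim (poly p) at_infinity at_top"
    using filterlim_mono[OF _ order_refl at_top_le_at_infinity] by blast
  with assms show False
    using not_tendsto_and_filterlim_at_infinity[OF trivial_limit_at_top_linorder] by blast
qed

lemma poly_divide_power_tendsto_at_right_0:
  fixes p :: "real poly"
  assumes "((\<lambda>x. poly p x / x ^ n) \<longlongrightarrow> a) (at_right 0)"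
  shows "\<exists>q. \<forall>x>0. poly p x / x ^ n = poly q x"
  using assms
proof (induction n arbitrary: p)
  case 0
  then show ?case by auto
next
  case (Suc n)
  have "((\<lambda>x. poly p x / x ^ Suc n * x ^ Suc n) \<longlongrightarrow> a * 0 ^ Suc n) (at_right 0)"
    by (intro tendsto_intros Suc.prems)
  moreover have "((\<lambda>x. poly p x / x ^ Suc n * x ^ Suc n) \<longlongrightarrow> poly p 0) (at_right 0)"
  proof (subst tendsto_cong_pos[OF eventually_at_right_less])
    show "((\<lambda>x. poly p x) \<longlongrightarrow> poly p 0) (at_right 0)"
      by (intro tendsto_intros)
  qed simp
  ultimately have "poly p 0 = 0"
    using tendsto_unique[OF trivial_limit_at_right_real] by force
  then obtain r where p: "p = [:0, 1:] * r"
    by (auto simp: poly_eq_0_iff_dvd)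
  have eq: "\<forall>x>0. poly p x / x ^ Suc n = poly r x / x ^ n"
    by (simp add: p)
  from Suc.prems have "((\<lambda>x. poly r x / x ^ n) \<longlongrightarrow> a) (at_right 0)"
    using tendsto_cong_pos[OF eventually_at_right_less eq] by simp
  from Suc.IH[OF this] show ?case
    using eq by simp
qed

lemma laurent_fun_limits_eq:
  assumes "laurent_fun h" and h0: "(h \<longlongrightarrow> a) (at_right 0)" and h_top: "(h \<longlongrightarrow> b) at_top"
  shows "a = b"
proof -
  obtain p n where p: "\<forall>x>0. h x = poly p x / x ^ n"
    using assms(1) unfolding laurent_fun_def by blast
  have "((\<lambda>x. poly p x / x ^ n) \<longlongrightarrow> a) (at_right 0)"
    using h0 tendsto_cong_pos[OF eventually_at_right_less p] by simp
  then obtain q where "\<forall>x>0. poly p x / x ^ n = poly q x"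
    using poly_divide_power_tendsto_at_right_0 by blast
  with p have q: "\<forall>x>0. h x = poly q x"
    by simp
  have "(poly q \<longlongrightarrow> b) at_top"
    using h_top tendsto_cong_pos[OF eventually_gt_at_top q] by simp
  then obtain c where "q = [:c:]"
    using poly_tendsto_at_top_imp_degree_0 degree_eq_zeroE by blast
  with q have const: "\<forall>x>0. h x = c"
    by simp
  have "a = c"
    using tendsto_cong_pos[OF eventually_at_right_less const] h0
    by (simp add: tendsto_const_iff)
  moreover have "b = c"
    using tendsto_cong_pos[OF eventually_gt_at_top const] h_top
    by (simp add: tendsto_const_iff)
  ultimately show ?thesis by simp
qed

definition admissible_fun :: "(real \<Rightarrow> real) \<Rightarrow> bool" where
  "admissible_fun h \<longleftrightarrow> h 1 = 1/2 \<and> (h \<longlongrightarrow> 0) (at_right 0) \<and> (h \<longlongrightarrow> 1) at_top"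

lemma laurent_fun_not_admissible_fun: "laurent_fun h \<Longrightarrow> \<not> admissible_fun h"
  unfolding admissible_fun_def using laurent_fun_limits_eq by fastforce

lemma linear_fractional_admissible_fun_unique:
  assumes adm: "admissible_fun h" and h: "\<forall>x>0. h x = (p * x + q) / (a * x + b)"
  shows "\<forall>x>0. h x = x / (1 + x)"
proof -
  from adm have h1: "h 1 = 1/2" and h0: "(h \<longlongrightarrow> 0) (at_right 0)" and h_top: "(h \<longlongrightarrow> 1) at_top"
    unfolding admissible_fun_def by auto
  have not_laurent: "\<not> laurent_fun (\<lambda>x. (p * x + q) / (a * x + b))"
    using laurent_fun_cong[OF h] laurent_fun_not_admissible_fun adm by blast
  have "a \<noteq> 0"
  proof
    assume "a = 0"
    with not_laurent show False
      by (simp add: laurent_fun_intros)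
  qed
  have "b \<noteq> 0"
  proof
    assume "b = 0"
    with not_laurent show False
      by (simp add: laurent_fun_intros)
  qed
  have "((\<lambda>x. (p * x + q) / (a * x + b)) \<longlongrightarrow> (p * 0 + q) / (a * 0 + b)) (at_right 0)"
    using \<open>b \<noteq> 0\<close> by (intro tendsto_intros) auto
  then have "(h \<longlongrightarrow> q / b) (at_right 0)"
    using tendsto_cong_pos[OF eventually_at_right_less h] by simp
  with h0 have "q / b = 0"
    using tendsto_unique[OF trivial_limit_at_right_real] by blast
  with \<open>b \<noteq> 0\<close> have "q = 0" by simp
  have h_inv: "\<forall>x>0. h x = p / (a + b * inverse x)"
    using h \<open>q = 0\<close> by (simp add: field_simps)
  have "((\<lambda>x. p / (a + b * inverse x)) \<longlongrightarrow> p / (a + b * 0)) at_top"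
    using \<open>a \<noteq> 0\<close> by (intro tendsto_intros tendsto_inverse_0_at_top filterlim_ident) auto
  then have "(h \<longlongrightarrow> p / a) at_top"
    using tendsto_cong_pos[OF eventually_gt_at_top h_inv] by simp
  with h_top have "p / a = 1"
    using tendsto_unique[OF trivial_limit_at_top_linorder] by blast
  with \<open>a \<noteq> 0\<close> have "p = a" by simp
  have "a + b \<noteq> 0"
    using h1 h by auto
  with h1 h \<open>p = a\<close> \<open>q = 0\<close> have "b = a"
    by (simp add: field_simps)
  show ?thesis
  proof (intro allI impI)
    fix x :: real
    assume "x > 0"
    then have "h x = (a * x) / (a * (1 + x))"
      using h \<open>p = a\<close> \<open>q = 0\<close> \<open>b = a\<close> by (simp add: algebra_simps)
    with \<open>a \<noteq> 0\<close> show "h x = x / (1 + x)"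
      by simp
  qed
qed

(* Evaluation with HOL's total division (x / 0 = 0), so that the shape analysis below needs no
   definedness side conditions. *)
fun teval :: "expr \<Rightarrow> real \<Rightarrow> real" where
  "teval Var x = x"
| "teval (Const c) x = c"
| "teval (Add a b) x = teval a x + teval b x"
| "teval (Sub a b) x = teval a x - teval b x"
| "teval (Mul a b) x = teval a x * teval b x"
| "teval (Div a b) x = teval a x / teval b x"

lemma teval_fun:
  "teval Var = (\<lambda>x. x)"
  "teval (Const c) = (\<lambda>x. c)"
  "teval (Add a b) = (\<lambda>x. teval a x + teval b x)"
  "teval (Sub a b) = (\<lambda>x. teval a x - teval b x)"
  "teval (Mul a b) = (\<lambda>x. teval a x * teval b x)"
  "teval (Div a b) = (\<lambda>x. teval a x / teval b x)"
  by (simp_all add: fun_eq_iff)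

lemma eval_Some_imp_teval: "eval e x = Some v \<Longrightarrow> teval e x = v"
  by (induction e arbitrary: v) (auto split: option.splits if_splits)

lemma ops_eq_0_iff: "ops e = 0 \<longleftrightarrow> e = Var \<or> (\<exists>c. e = Const c)"
  by (cases e) auto

lemma teval_ops_0_affine: "ops e = 0 \<Longrightarrow> \<exists>a b. \<forall>x. teval e x = a * x + b"
  by (auto simp: ops_eq_0_iff intro: exI[of _ 1] exI[of _ 0])

lemma laurent_fun_inverse_teval_ops_0: "ops e = 0 \<Longrightarrow> laurent_fun (\<lambda>x. inverse (teval e x))"
  by (auto simp: ops_eq_0_iff intro: laurent_fun_intros)

lemma laurent_fun_teval_ops_le_1: "ops e \<le> 1 \<Longrightarrow> laurent_fun (teval e)"
proof (induction e)
  case (Div a b)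
  then have "laurent_fun (teval a)" and "ops b = 0"
    by auto
  then show ?case
    by (simp add: teval_fun laurent_fun_divide laurent_fun_inverse_teval_ops_0)
qed (auto simp: teval_fun intro: laurent_fun_intros)

lemma teval_ops_le_1_affine_or_inverse_laurent_fun:
  assumes "ops e \<le> 1"
  shows "(\<exists>a b. \<forall>x. teval e x = a * x + b) \<or> laurent_fun (\<lambda>x. inverse (teval e x))"
proof (cases e)
  case (Add e1 e2)
  with assms have "ops e1 = 0" "ops e2 = 0"
    by auto
  then obtain a1 b1 a2 b2 where "\<forall>x. teval e1 x = a1 * x + b1" "\<forall>x. teval e2 x = a2 * x + b2"
    using teval_ops_0_affine by meson
  with Add show ?thesis
    by (intro disjI1 exI[of _ "a1 + a2"] exI[of _ "b1 + b2"]) (simp add: algebra_simps)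
next
  case (Sub e1 e2)
  with assms have "ops e1 = 0" "ops e2 = 0"
    by auto
  then obtain a1 b1 a2 b2 where "\<forall>x. teval e1 x = a1 * x + b1" "\<forall>x. teval e2 x = a2 * x + b2"
    using teval_ops_0_affine by meson
  with Sub show ?thesis
    by (intro disjI1 exI[of _ "a1 - a2"] exI[of _ "b1 - b2"]) (simp add: algebra_simps)
next
  case (Mul e1 e2)
  with assms have "ops e1 = 0" "ops e2 = 0"
    by auto
  with Mul show ?thesis
    using laurent_fun_mult[of "\<lambda>x. inverse (teval e1 x)" "\<lambda>x. inverse (teval e2 x)"]
    by (simp add: laurent_fun_inverse_teval_ops_0)
next
  case (Div e1 e2)
  with assms have "ops e1 = 0" "laurent_fun (teval e2)"
    by (auto intro: laurent_fun_teval_ops_le_1)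
  with Div show ?thesis
    using laurent_fun_divide[of "teval e2" "teval e1"]
    by (simp add: laurent_fun_inverse_teval_ops_0)
qed (auto intro: laurent_fun_intros)

lemma teval_ops_le_2_laurent_fun_or_linear_fractional:
  assumes "ops e \<le> 2"
  shows "laurent_fun (teval e) \<or> (\<exists>p q a b. \<forall>x. teval e x = (p * x + q) / (a * x + b))"
proof (cases e)
  case (Div e1 e2)
  with assms have "ops e1 \<le> 1" "ops e2 \<le> 1"
    by auto
  show ?thesis
  proof (cases "laurent_fun (\<lambda>x. inverse (teval e2 x))")
    case True
    with Div show ?thesis
      using laurent_fun_divide laurent_fun_teval_ops_le_1[OF \<open>ops e1 \<le> 1\<close>] by (simp add: teval_fun)
  next
    case False
    then have "ops e2 \<noteq> 0"
      using laurent_fun_inverse_teval_ops_0 by blast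
    with Div assms have "ops e1 = 0"
      by simp
    then obtain p q where "\<forall>x. teval e1 x = p * x + q"
      using teval_ops_0_affine by blast
    moreover obtain a b where "\<forall>x. teval e2 x = a * x + b"
      using teval_ops_le_1_affine_or_inverse_laurent_fun[OF \<open>ops e2 \<le> 1\<close>] False by blast
    ultimately have "\<forall>x. teval e x = (p * x + q) / (a * x + b)"
      using Div by simp
    then show ?thesis
      by blast
  qed
next
  case (Add e1 e2)
  with assms have "ops e1 \<le> 1" "ops e2 \<le> 1"
    by auto
  with Add show ?thesis
    by (simp add: teval_fun laurent_fun_add laurent_fun_teval_ops_le_1)
next
  case (Sub e1 e2)
  with assms have "ops e1 \<le> 1" "ops e2 \<le> 1"
    by auto
  with Sub show ?thesis
    by (simp add: teval_fun laurent_fun_diff laurent_fun_teval_ops_le_1)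
next
  case (Mul e1 e2)
  with assms have "ops e1 \<le> 1" "ops e2 \<le> 1"
    by auto
  with Mul show ?thesis
    by (simp add: teval_fun laurent_fun_mult laurent_fun_teval_ops_le_1)
qed (simp_all add: teval_fun laurent_fun_intros)

lemma admissible_iff_admissible_fun:
  assumes f: "\<forall>x>0. eval e x = Some (f x)"
  shows "admissible e \<longleftrightarrow> (\<forall>x>0. 0 \<le> f x \<and> f x \<le> 1) \<and> admissible_fun f"
proof -
  have the_eval: "\<forall>x>0. the (eval e x) = f x"
    using f by simp
  have lim: "((\<lambda>x. the (eval e x)) \<longlongrightarrow> l) F \<longleftrightarrow> (f \<longlongrightarrow> l) F"
    if "\<forall>\<^sub>F x in F. x > 0" for l F
    by (rule tendsto_cong_pos[OF that the_eval])
  have "(\<forall>x>0. \<exists>v. eval e x = Some v \<and> 0 \<le> v \<and> v \<le> 1) \<longleftrightarrow> (\<forall>x>0. 0 \<le> f x \<and> f x \<le> 1)"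
    using f by simp
  moreover have "eval e 1 = Some (1/2) \<longleftrightarrow> f 1 = 1/2"
    using f by simp
  ultimately show ?thesis
    unfolding admissible_def admissible_fun_def
    using lim[OF eventually_at_right_less[of 0]] lim[OF eventually_gt_at_top[of 0]] by simp
qed

lemma admissible_imp_eval_eq_Some_teval:
  assumes "admissible e" and "x > 0"
  shows "eval e x = Some (teval e x)"
proof -
  obtain v where "eval e x = Some v"
    using assms unfolding admissible_def by blast
  then show ?thesis
    using eval_Some_imp_teval by simp
qed

lemma admissible_imp_admissible_fun_teval: "admissible e \<Longrightarrow> admissible_fun (teval e)"
  using admissible_iff_admissible_fun admissible_imp_eval_eq_Some_teval by blast

lemma not_admissible_ops_le_1: "ops e \<le> 1 \<Longrightarrow> \<not> admissible e"
  using laurent_fun_teval_ops_le_1 laurent_fun_not_admissible_fun admissible_imp_admissible_fun_teval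
  by blast

lemma admissible_ops_le_2_eval_eq:
  assumes "ops e \<le> 2" and "admissible e" and "x > 0"
  shows "eval e x = Some (x / (1 + x))"
proof -
  have adm: "admissible_fun (teval e)"
    using admissible_imp_admissible_fun_teval[OF assms(2)] .
  then have "\<not> laurent_fun (teval e)"
    using laurent_fun_not_admissible_fun by blast
  then obtain p q a b where "\<forall>x. teval e x = (p * x + q) / (a * x + b)"
    using teval_ops_le_2_laurent_fun_or_linear_fractional[OF assms(1)] by blast
  then have "teval e x = x / (1 + x)"
    using linear_fractional_admissible_fun_unique[OF adm] \<open>x > 0\<close> by blast
  then show ?thesis
    using admissible_imp_eval_eq_Some_teval[OF assms(2,3)] by simp
qed

lemma admissible_x_div_1_plus_x: "admissible (Div Var (Add (Const 1) Var))"
proof -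
  have eval: "\<forall>x>0. eval (Div Var (Add (Const 1) Var)) x = Some (x / (1 + x))"
    by simp
  have range: "\<forall>x::real>0. 0 \<le> x / (1 + x) \<and> x / (1 + x) \<le> 1"
    by (simp add: divide_le_eq)
  have "((\<lambda>x::real. x / (1 + x)) \<longlongrightarrow> 0) (at_right 0)" and "((\<lambda>x::real. x / (1 + x)) \<longlongrightarrow> 1) at_top"
    by real_asymp+
  then have "admissible_fun (\<lambda>x. x / (1 + x))"
    unfolding admissible_fun_def by simp
  with range show ?thesis
    using admissible_iff_admissible_fun[OF eval] by blast
qed

theorem mainTheorem2:
  shows "(\<forall>e. ops e \<le> 1 \<longrightarrow> \<not> admissible e)
       \<and> (\<forall>e. ops e = 2 \<longrightarrow> admissible e \<longrightarrow> (\<forall>x::real. x > 0 \<longrightarrow> eval e x = Some (x / (1 + x))))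
       \<and> admissible (Div Var (Add (Const 1) Var))
       \<and> (\<forall>e. ops e = 2 \<longrightarrow> admissible e \<longrightarrow>
            (\<forall>pi pj :: real. pi > 0 \<longrightarrow> pj > 0 \<longrightarrow> eval e (pi / pj) = Some (pi / (pi + pj))))"
proof (intro conjI allI impI)
  show "\<not> admissible e" if "ops e \<le> 1" for e
    using not_admissible_ops_le_1 that .
  show "eval e x = Some (x / (1 + x))" if "ops e = 2" "admissible e" "x > 0" for e x
    using admissible_ops_le_2_eval_eq that by simp
  show "admissible (Div Var (Add (Const 1) Var))"
    by (rule admissible_x_div_1_plus_x)
  show "eval e (pi / pj) = Some (pi / (pi + pj))"
    if "ops e = 2" "admissible e" "pi > 0" "pj > 0" for e pi pj
  proof -
    have "pi / pj / (1 + pi / pj) = pi / (pi + pj)"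
      using that by (simp add: field_simps)
    with admissible_ops_le_2_eval_eq[of e "pi / pj"] that show ?thesis
      by simp
  qed
qed

end
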